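(* Let $Q$ be a finite quiver of diameter $1$. As $\le$ ranges over all graphic orderings of $Q$, the simple labelings $\sigma_\le$ range over exactly the set of strict acyclic labelings of the simplification $Q^{\mathrm s}$.
   Context: Quivers: - $Q$ has diameter $1$ if no vertex is both the target of an arrow and the source of an arrow. - A sink is a vertex that is the target of some arrow; every other vertex (including isolated ones) is a source. - $d,c$ denote the source and target maps. Simplification: - An arrow $s\to t$ is isolated if it is the unique arrow from $s$ to $t$, and parallel otherwise. - A sink is isolating if it is the target of some isolated arrow. - $Q^{\mathrm s}$ is obtained from $Q$ by deleting all parallel arrows and all non-isolating sinks. Labelings: - A labeling is a map from the arrows to $\{+,-\}$. It is acyclic if reversing the arrows labelled $-$ yields an orientation of the underlying multigraph without directed cycles. - It is strict if every sink is the target of exactly one arrow labelled $+$. Graphic orderings: - A graphic ordering of $Q$ is a linear order $\le$ on the set of sources of $Q$. - It determines a labeling $\sigma_\le$ of $Q^{\mathrm s}$: for an arrow $x$ of $Q^{\mathrm s}$, $\sigma_\le(x)=+$ if and only if $d(x)$ is the $\le$-least element of $\{d(y)\mid y \text{ an arrow of } Q^{\mathrm s},\ c(y)=c(x)\}$. *)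

theory Defs
  imports Main
begin

text \<open>A quiver is given by a vertex set V, an arrow set E and source/target
maps d, c. Labels are Plus / Minus.\<close>

datatype sign = Plus | Minus

definition quiver :: "'v set \<Rightarrow> 'e set \<Rightarrow> ('e \<Rightarrow> 'v) \<Rightarrow> ('e \<Rightarrow> 'v) \<Rightarrow> bool" where
  "quiver V E d c \<longleftrightarrow> (\<forall>x\<in>E. d x \<in> V \<and> c x \<in> V)"

definition finite_quiver :: "'v set \<Rightarrow> 'e set \<Rightarrow> ('e \<Rightarrow> 'v) \<Rightarrow> ('e \<Rightarrow> 'v) \<Rightarrow> bool" where
  "finite_quiver V E d c \<longleftrightarrow> quiver V E d c \<and> finite V \<and> finite E"

definition diameter_one :: "'e set \<Rightarrow> ('e \<Rightarrow> 'v) \<Rightarrow> ('e \<Rightarrow> 'v) \<Rightarrow> bool" where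
  "diameter_one E d c \<longleftrightarrow> (\<forall>x\<in>E. \<forall>y\<in>E. c x \<noteq> d y)"

definition sinks :: "'v set \<Rightarrow> 'e set \<Rightarrow> ('e \<Rightarrow> 'v) \<Rightarrow> 'v set" where
  "sinks V E c = {v\<in>V. \<exists>x\<in>E. c x = v}"

definition sources :: "'v set \<Rightarrow> 'e set \<Rightarrow> ('e \<Rightarrow> 'v) \<Rightarrow> 'v set" where
  "sources V E c = V - sinks V E c"

definition isolated_arrow :: "'e set \<Rightarrow> ('e \<Rightarrow> 'v) \<Rightarrow> ('e \<Rightarrow> 'v) \<Rightarrow> 'e \<Rightarrow> bool" where
  "isolated_arrow E d c x \<longleftrightarrow> x \<in> E \<and> (\<forall>y\<in>E. d y = d x \<and> c y = c x \<longrightarrow> y = x)"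

definition isolating_sinks :: "'v set \<Rightarrow> 'e set \<Rightarrow> ('e \<Rightarrow> 'v) \<Rightarrow> ('e \<Rightarrow> 'v) \<Rightarrow> 'v set" where
  "isolating_sinks V E d c = {v \<in> sinks V E c. \<exists>x\<in>E. isolated_arrow E d c x \<and> c x = v}"

text \<open>The simplification Q^s: delete all parallel arrows and all non-isolating sinks.\<close>
definition simp_arrows :: "'e set \<Rightarrow> ('e \<Rightarrow> 'v) \<Rightarrow> ('e \<Rightarrow> 'v) \<Rightarrow> 'e set" where
  "simp_arrows E d c = {x\<in>E. isolated_arrow E d c x}"

definition simp_verts :: "'v set \<Rightarrow> 'e set \<Rightarrow> ('e \<Rightarrow> 'v) \<Rightarrow> ('e \<Rightarrow> 'v) \<Rightarrow> 'v set" where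
  "simp_verts V E d c = V - (sinks V E c - isolating_sinks V E d c)"

definition oriented_edges :: "'e set \<Rightarrow> ('e \<Rightarrow> 'v) \<Rightarrow> ('e \<Rightarrow> 'v) \<Rightarrow> ('e \<Rightarrow> sign) \<Rightarrow> ('v \<times> 'v) set" where
  "oriented_edges E d c \<sigma> = {(if \<sigma> x = Plus then (d x, c x) else (c x, d x)) | x. x \<in> E}"

definition acyclic_labeling :: "'e set \<Rightarrow> ('e \<Rightarrow> 'v) \<Rightarrow> ('e \<Rightarrow> 'v) \<Rightarrow> ('e \<Rightarrow> sign) \<Rightarrow> bool" where
  "acyclic_labeling E d c \<sigma> \<longleftrightarrow> acyclic (oriented_edges E d c \<sigma>)"

definition strict_labeling :: "'v set \<Rightarrow> 'e set \<Rightarrow> ('e \<Rightarrow> 'v) \<Rightarrow> ('e \<Rightarrow> sign) \<Rightarrow> bool" where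
  "strict_labeling V E c \<sigma> \<longleftrightarrow> (\<forall>v\<in>sinks V E c. \<exists>!x. x \<in> E \<and> c x = v \<and> \<sigma> x = Plus)"

definition graphic_ordering :: "'v set \<Rightarrow> 'e set \<Rightarrow> ('e \<Rightarrow> 'v) \<Rightarrow> ('v \<times> 'v) set \<Rightarrow> bool" where
  "graphic_ordering V E c le \<longleftrightarrow> linear_order_on (sources V E c) le"

definition sigma_le :: "'e set \<Rightarrow> ('e \<Rightarrow> 'v) \<Rightarrow> ('e \<Rightarrow> 'v) \<Rightarrow> ('v \<times> 'v) set \<Rightarrow> 'e \<Rightarrow> sign" where
  "sigma_le E d c le x =
     (let S = {d y | y. y \<in> simp_arrows E d c \<and> c y = c x} in
      if d x \<in> S \<and> (\<forall>z\<in>S. (d x, z) \<in> le) then Plus else Minus)"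

end

theory Submission
  imports Defs "HOL-Library.Product_Lexorder"
begin

text \<open>By diameter one, every arrow runs from a source to a sink. Given a linear order on the
  sources, each sink v of the simplification has a least in-neighbour, and the arrows labelled
  Plus are exactly those leaving it: this gives strictness, and a potential that ranks the sources
  by the order and puts each sink just above its least in-neighbour proves acyclicity.
  Conversely, a strict acyclic labeling orients the arrows acyclically; extend that orientation
  to a linear order of the sources. If p is the Plus arrow into v and y any other arrow into v,
  the orientation contains the path d p \<rightarrow> v \<rightarrow> d y, so d p is the least
  in-neighbour of v and the labeling is the one induced by the order.\<close>

lemma linear_order_on_finite_has_least:
  assumes "finite S" "S \<noteq> {}" "S \<subseteq> D" "linear_order_on D le"
  shows "\<exists>m\<in>S. \<forall>z\<in>S. (m, z) \<in> le"
  using assms(1-3)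
proof (induction S rule: finite_ne_induct)
  case (singleton x)
  then show ?case using assms(4) by (auto simp: order_on_defs refl_on_def)
next
  case (insert x F)
  then obtain m where m: "m \<in> F" "\<forall>z\<in>F. (m, z) \<in> le" by auto
  have "x \<in> D" "m \<in> D" using insert m by auto
  with assms(4) have "(x, m) \<in> le \<or> (m, x) \<in> le"
    by (cases "x = m") (auto simp: order_on_defs refl_on_def total_on_def)
  then show ?case
  proof
    assume "(x, m) \<in> le"
    with m assms(4) have "\<forall>z\<in>F. (x, z) \<in> le" by (auto simp: order_on_defs dest: transD)
    with \<open>x \<in> D\<close> assms(4) show ?thesis by (auto simp: order_on_defs refl_on_def)
  qed (use m in auto)
qed

definition pred_count :: "'a set \<Rightarrow> 'a rel \<Rightarrow> 'a \<Rightarrow> nat" where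
  "pred_count S r a = card {t\<in>S. (t, a) \<in> r}"

lemma pred_count_strict_mono:
  assumes "finite S" "trans r" "(a, b) \<in> r" "t \<in> S" "(t, b) \<in> r" "(t, a) \<notin> r"
  shows "pred_count S r a < pred_count S r b"
proof -
  have "{t\<in>S. (t, a) \<in> r} \<subset> {t\<in>S. (t, b) \<in> r}"
    using assms(2-6) by (auto dest: transD)
  then show ?thesis unfolding pred_count_def using assms(1) by (simp add: psubset_card_mono)
qed

lemma linear_order_on_inj_key:
  fixes h :: "'a \<Rightarrow> 'b::linorder"
  assumes "inj_on h S"
  shows "linear_order_on S {(a, b). a \<in> S \<and> b \<in> S \<and> h a \<le> h b}"
  using assms
  by (auto simp: order_on_defs refl_on_def trans_def antisym_def total_on_def inj_on_def)

lemma finite_acyclic_linear_extension: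
  assumes "finite S" "acyclic R"
  obtains le where "linear_order_on S le"
    "\<And>a b. a \<in> S \<Longrightarrow> b \<in> S \<Longrightarrow> (a, b) \<in> R\<^sup>+ \<Longrightarrow> (a, b) \<in> le"
proof -
  obtain g :: "'a \<Rightarrow> nat" where "inj_on g S"
    using finite_imp_inj_to_nat_seg[OF assms(1)] by blast
  define h where "h a = (pred_count S (R\<^sup>+) a, g a)" for a
  have "inj_on h S" using \<open>inj_on g S\<close> by (auto simp: inj_on_def h_def)
  moreover have "h a \<le> h b" if "a \<in> S" "(a, b) \<in> R\<^sup>+" for a b
  proof -
    have "(a, a) \<notin> R\<^sup>+" using assms(2) by (simp add: acyclic_def)
    with that have "pred_count S (R\<^sup>+) a < pred_count S (R\<^sup>+) b"
      by (intro pred_count_strict_mono[OF assms(1) trans_trancl]) auto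
    then show ?thesis by (simp add: h_def less_eq_prod_def)
  qed
  ultimately show ?thesis using that linear_order_on_inj_key by blast
qed

lemma oriented_edge_Plus:
  "x \<in> A \<Longrightarrow> \<sigma> x = Plus \<Longrightarrow> (d x, c x) \<in> oriented_edges A d c \<sigma>"
  unfolding oriented_edges_def by (intro CollectI exI[of _ x]) simp

lemma oriented_edge_not_Plus:
  "x \<in> A \<Longrightarrow> \<sigma> x \<noteq> Plus \<Longrightarrow> (c x, d x) \<in> oriented_edges A d c \<sigma>"
  unfolding oriented_edges_def by (intro CollectI exI[of _ x]) simp

lemma sign_eqI: "(s = Plus \<longleftrightarrow> t = Plus) \<Longrightarrow> s = t"
  by (cases s; cases t) auto

locale diameter_one_quiver =
  fixes V :: "'v set" and E :: "'e set" and d c :: "'e \<Rightarrow> 'v"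
  assumes finite_quiver: "finite_quiver V E d c"
    and diameter_one: "diameter_one E d c"
begin

abbreviation "Es \<equiv> simp_arrows E d c"
abbreviation "Src \<equiv> sources V E c"

definition in_neighbours :: "'v \<Rightarrow> 'v set" where
  "in_neighbours v = {d y | y. y \<in> Es \<and> c y = v}"

definition labeling :: "'v rel \<Rightarrow> 'e \<Rightarrow> sign" where
  "labeling le x = (if x \<in> Es then sigma_le E d c le x else undefined)"

lemma simp_arrows_subset: "Es \<subseteq> E"
  by (auto simp: simp_arrows_def)

lemma source_in_sources: "x \<in> E \<Longrightarrow> d x \<in> Src"
  using finite_quiver diameter_one
  by (fastforce simp: finite_quiver_def quiver_def diameter_one_def sources_def sinks_def)

lemma target_notin_sources: "x \<in> E \<Longrightarrow> c x \<notin> Src"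
  using finite_quiver by (auto simp: finite_quiver_def quiver_def sources_def sinks_def)

lemma finite_sources: "finite Src"
  using finite_quiver by (simp add: finite_quiver_def sources_def)

lemma simp_arrow_eqI: "x \<in> Es \<Longrightarrow> y \<in> Es \<Longrightarrow> d x = d y \<Longrightarrow> c x = c y \<Longrightarrow> x = y"
  by (auto simp: simp_arrows_def isolated_arrow_def)

lemma sinks_simplification: "sinks (simp_verts V E d c) Es c = c ` Es"
proof -
  have "c x \<in> simp_verts V E d c" if "x \<in> Es" for x
    using that finite_quiver simp_arrows_subset
    by (auto simp: simp_verts_def isolating_sinks_def sinks_def simp_arrows_def
        finite_quiver_def quiver_def)
  then show ?thesis by (auto simp: sinks_def)
qed

lemma in_neighbours_subset_sources: "in_neighbours v \<subseteq> Src"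
  using simp_arrows_subset source_in_sources by (auto simp: in_neighbours_def)

lemma finite_in_neighbours: "finite (in_neighbours v)"
  using finite_subset[OF in_neighbours_subset_sources finite_sources] .

lemma source_in_in_neighbours: "x \<in> Es \<Longrightarrow> d x \<in> in_neighbours (c x)"
  by (auto simp: in_neighbours_def)

lemma labeling_Plus_iff:
  "x \<in> Es \<Longrightarrow> labeling le x = Plus \<longleftrightarrow> (\<forall>z\<in>in_neighbours (c x). (d x, z) \<in> le)"
  using source_in_in_neighbours[of x]
  by (simp add: labeling_def sigma_le_def in_neighbours_def[symmetric])

lemma least_in_neighbours_eq:
  assumes "linear_order_on Src le" "m \<in> in_neighbours v" "m' \<in> in_neighbours v"
    "\<forall>z\<in>in_neighbours v. (m, z) \<in> le" "\<forall>z\<in>in_neighbours v. (m', z) \<in> le"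
  shows "m = m'"
  using assms by (auto simp: order_on_defs antisym_def)

lemma least_in_neighbours_exists:
  assumes "linear_order_on Src le" "x \<in> Es"
  obtains m where "m \<in> in_neighbours (c x)" "\<forall>z\<in>in_neighbours (c x). (m, z) \<in> le"
  using linear_order_on_finite_has_least[OF finite_in_neighbours _ in_neighbours_subset_sources assms(1)]
    source_in_in_neighbours[OF assms(2)] by blast

lemma labeling_strict:
  assumes "linear_order_on Src le"
  shows "strict_labeling (simp_verts V E d c) Es c (labeling le)"
  unfolding strict_labeling_def sinks_simplification
proof
  fix v assume "v \<in> c ` Es"
  then obtain x where x: "x \<in> Es" "c x = v" by auto
  obtain m where m: "m \<in> in_neighbours v" "\<forall>z\<in>in_neighbours v. (m, z) \<in> le"
    using least_in_neighbours_exists[OF assms x(1)] x(2) by blast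
  then obtain y where y: "y \<in> Es" "c y = v" "d y = m" by (auto simp: in_neighbours_def)
  show "\<exists>!x. x \<in> Es \<and> c x = v \<and> labeling le x = Plus"
  proof
    show "y \<in> Es \<and> c y = v \<and> labeling le y = Plus"
      using y m labeling_Plus_iff by auto
  next
    fix x assume x: "x \<in> Es \<and> c x = v \<and> labeling le x = Plus"
    then have "d x = m"
      using least_in_neighbours_eq[OF assms _ m(1) _ m(2)] source_in_in_neighbours labeling_Plus_iff by blast
    then show "x = y" using simp_arrow_eqI x y by auto
  qed
qed

lemma labeling_acyclic:
  assumes le: "linear_order_on Src le"
  shows "acyclic_labeling Es d c (labeling le)"
proof -
  define rank where "rank = pred_count Src le"
  define \<phi> where "\<phi> v = (if v \<in> Src then 2 * rank v else 2 * Min (rank ` in_neighbours v) + 1)" for v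
  have rank_less: "rank a < rank b" if "a \<in> Src" "b \<in> Src" "(a, b) \<in> le" "a \<noteq> b" for a b
    unfolding rank_def
    using that le by (intro pred_count_strict_mono[OF finite_sources, where t = b])
      (auto simp: order_on_defs refl_on_def antisym_def)
  have \<phi>_sink: "\<phi> v = 2 * rank m + 1"
    if "v \<notin> Src" and m: "m \<in> in_neighbours v" "\<forall>z\<in>in_neighbours v. (m, z) \<in> le" for v m
  proof -
    have "rank m \<le> rank z" if "z \<in> in_neighbours v" for z
      using rank_less[of m z] that m in_neighbours_subset_sources by (cases "m = z") force+
    then have "Min (rank ` in_neighbours v) = rank m"
      using m(1) by (intro Min_eqI) (auto simp: finite_in_neighbours)
    then show ?thesis using that(1) by (simp add: \<phi>_def)
  qed
  have "\<phi> u < \<phi> w" if "(u, w) \<in> oriented_edges Es d c (labeling le)" for u w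
  proof -
    from that obtain x where x: "x \<in> Es"
      "(u, w) = (if labeling le x = Plus then (d x, c x) else (c x, d x))"
      by (auto simp: oriented_edges_def)
    obtain m where m: "m \<in> in_neighbours (c x)" "\<forall>z\<in>in_neighbours (c x). (m, z) \<in> le"
      using least_in_neighbours_exists[OF le x(1)] by blast
    have "d x \<in> Src" "c x \<notin> Src"
      using x(1) simp_arrows_subset source_in_sources target_notin_sources by auto
    then have \<phi>_dc: "\<phi> (d x) = 2 * rank (d x)" "\<phi> (c x) = 2 * rank m + 1"
      using \<phi>_sink[OF _ m] by (auto simp: \<phi>_def)
    have "d x = m \<longleftrightarrow> labeling le x = Plus"
      using least_in_neighbours_eq[OF le source_in_in_neighbours[OF x(1)] m(1) _ m(2)]
        labeling_Plus_iff[OF x(1)] m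
      by blast
    moreover have "d x \<noteq> m \<Longrightarrow> rank m < rank (d x)"
      using rank_less m source_in_in_neighbours[OF x(1)] in_neighbours_subset_sources by blast
    ultimately show ?thesis using x(2) \<phi>_dc by (auto split: if_splits)
  qed
  then have "acyclic ((oriented_edges Es d c (labeling le))\<inverse>)"
    by (intro acyclicI_order[where f = \<phi>]) auto
  then show ?thesis by (simp add: acyclic_labeling_def)
qed

lemma strict_labeling_Plus_arrow:
  assumes "strict_labeling (simp_verts V E d c) Es c \<sigma>" "x \<in> Es"
  obtains p where "p \<in> Es" "c p = c x" "\<sigma> p = Plus"
    "\<And>y. y \<in> Es \<Longrightarrow> c y = c x \<Longrightarrow> \<sigma> y = Plus \<Longrightarrow> y = p"
proof -
  have "\<exists>!p. p \<in> Es \<and> c p = c x \<and> \<sigma> p = Plus"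
    using assms unfolding strict_labeling_def sinks_simplification by blast
  with that show ?thesis by blast
qed

lemma Plus_arrow_source_least:
  assumes strict: "strict_labeling (simp_verts V E d c) Es c \<sigma>"
    and le: "linear_order_on Src le"
    and extends: "\<And>a b. a \<in> Src \<Longrightarrow> b \<in> Src \<Longrightarrow>
      (a, b) \<in> (oriented_edges Es d c \<sigma>)\<^sup>+ \<Longrightarrow> (a, b) \<in> le"
    and p: "p \<in> Es" "\<sigma> p = Plus"
  shows "\<forall>z\<in>in_neighbours (c p). (d p, z) \<in> le"
proof
  fix z assume "z \<in> in_neighbours (c p)"
  then obtain y where y: "y \<in> Es" "c y = c p" "z = d y" by (auto simp: in_neighbours_def)
  have "d p \<in> Src" "d y \<in> Src" using p(1) y(1) simp_arrows_subset source_in_sources by auto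
  show "(d p, z) \<in> le"
  proof (cases "\<sigma> y = Plus")
    case True
    with strict_labeling_Plus_arrow[OF strict p(1)] p y have "y = p" by metis
    with \<open>d p \<in> Src\<close> le y(3) show ?thesis by (auto simp: order_on_defs refl_on_def)
  next
    case False
    have "(d p, c p) \<in> oriented_edges Es d c \<sigma>"
      using p by (rule oriented_edge_Plus)
    moreover have "(c p, d y) \<in> oriented_edges Es d c \<sigma>"
      using oriented_edge_not_Plus[where \<sigma> = \<sigma> and d = d and c = c, OF y(1) False] y(2) by simp
    ultimately have "(d p, d y) \<in> (oriented_edges Es d c \<sigma>)\<^sup>+"
      by (rule trancl_into_trancl[OF r_into_trancl])
    then show ?thesis using extends \<open>d p \<in> Src\<close> \<open>d y \<in> Src\<close> y(3) by blast
  qed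
qed

lemma strict_acyclic_labeling_induced:
  assumes undef: "\<forall>x. x \<notin> Es \<longrightarrow> \<sigma> x = undefined"
    and strict: "strict_labeling (simp_verts V E d c) Es c \<sigma>"
    and acyclic: "acyclic_labeling Es d c \<sigma>"
  obtains le where "linear_order_on Src le" "\<sigma> = labeling le"
proof -
  obtain le where le: "linear_order_on Src le"
    and extends: "\<And>a b. a \<in> Src \<Longrightarrow> b \<in> Src \<Longrightarrow>
      (a, b) \<in> (oriented_edges Es d c \<sigma>)\<^sup>+ \<Longrightarrow> (a, b) \<in> le"
    using finite_acyclic_linear_extension[OF finite_sources] acyclic
    unfolding acyclic_labeling_def by blast
  have "\<sigma> x = labeling le x" if x: "x \<in> Es" for x
  proof (rule sign_eqI)
    obtain p where p: "p \<in> Es" "c p = c x" "\<sigma> p = Plus"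
      and unique: "\<And>y. y \<in> Es \<Longrightarrow> c y = c x \<Longrightarrow> \<sigma> y = Plus \<Longrightarrow> y = p"
      using strict_labeling_Plus_arrow[OF strict x] by blast
    have "\<forall>z\<in>in_neighbours (c p). (d p, z) \<in> le"
      by (rule Plus_arrow_source_least[OF strict le extends p(1,3)])
    then have p_least: "d p \<in> in_neighbours (c x)" "\<forall>z\<in>in_neighbours (c x). (d p, z) \<in> le"
      using source_in_in_neighbours[OF p(1)] unfolding p(2) by blast+
    have "labeling le x = Plus \<longleftrightarrow> d x = d p"
      using labeling_Plus_iff[OF x] p_least(2)
        least_in_neighbours_eq[OF le source_in_in_neighbours[OF x] p_least(1) _ p_least(2)]
      by auto
    also have "\<dots> \<longleftrightarrow> x = p" using simp_arrow_eqI[OF x p(1)] p(2) by auto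
    also have "\<dots> \<longleftrightarrow> \<sigma> x = Plus" using unique[OF x] p(3) by auto
    finally show "\<sigma> x = Plus \<longleftrightarrow> labeling le x = Plus" by simp
  qed
  with undef have "\<sigma> = labeling le" by (auto simp: labeling_def)
  with le that show ?thesis by blast
qed

end

theorem mainTheorem9:
  fixes V :: "'v set" and E :: "'e set" and d c :: "'e \<Rightarrow> 'v"
  assumes "finite_quiver V E d c"
    and "diameter_one E d c"
  shows "(\<lambda>le x. if x \<in> simp_arrows E d c then sigma_le E d c le x else undefined)
           ` {le. graphic_ordering V E c le}
       = {\<sigma>. (\<forall>x. x \<notin> simp_arrows E d c \<longrightarrow> \<sigma> x = undefined) \<and>
              strict_labeling (simp_verts V E d c) (simp_arrows E d c) c \<sigma> \<and>
              acyclic_labeling (simp_arrows E d c) d c \<sigma>}"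
proof -
  interpret diameter_one_quiver V E d c using assms by unfold_locales
  have "labeling ` {le. linear_order_on Src le}
    = {\<sigma>. (\<forall>x. x \<notin> Es \<longrightarrow> \<sigma> x = undefined) \<and>
          strict_labeling (simp_verts V E d c) Es c \<sigma> \<and> acyclic_labeling Es d c \<sigma>}"
  proof (intro equalityI subsetI)
    fix \<sigma> assume "\<sigma> \<in> labeling ` {le. linear_order_on Src le}"
    then show "\<sigma> \<in> {\<sigma>. (\<forall>x. x \<notin> Es \<longrightarrow> \<sigma> x = undefined) \<and>
        strict_labeling (simp_verts V E d c) Es c \<sigma> \<and> acyclic_labeling Es d c \<sigma>}"
      using labeling_strict labeling_acyclic by (auto simp: labeling_def)
  next
    fix \<sigma> assume "\<sigma> \<in> {\<sigma>. (\<forall>x. x \<notin> Es \<longrightarrow> \<sigma> x = undefined) \<and>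
        strict_labeling (simp_verts V E d c) Es c \<sigma> \<and> acyclic_labeling Es d c \<sigma>}"
    then show "\<sigma> \<in> labeling ` {le. linear_order_on Src le}"
      by (auto elim: strict_acyclic_labeling_induced)
  qed
  then show ?thesis by (simp add: labeling_def[abs_def] graphic_ordering_def)
qed

end
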